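(* Let $n$ and $m$ be positive integers and $a>0$. Then \[ \int_{-a}^{1}\frac{\sin\bigl(2n\sin^{-1}\sqrt t\bigr)\sinh\bigl(2m\sinh^{-1}\sqrt{t/a}\bigr)}{\bigl\{\cos\bigl(2n\sin^{-1}\sqrt t\bigr)+\cosh\bigl(2m\sinh^{-1}\sqrt{t/a}\bigr)\bigr\}^2}\,t^j\,dt=\begin{cases}\pi/2,& j=-1,\\ 0,& j=0,1,\ldots,n+m-2.\end{cases} \]
   Context: $\cos(2n\sin^{-1}\sqrt t)=T_n(1-2t)$ and $\cosh(2m\sinh^{-1}\sqrt{t/a})=T_m(1+2t/a)$, with $T_k(\cos\theta)=\cos k\theta$ the Chebyshev polynomial of the first kind; their sum is positive on $[-a,1]$. Convention for negative arguments: for $t<0$, $\sqrt t:=i\sqrt{-t}$, $\sin^{-1}(iy):=i\sinh^{-1}y$ ($y\ge0$), $\sinh^{-1}(iy):=i\sin^{-1}y$ ($0\le y\le1$); with this convention the integrand is real. *)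

theory Defs
  imports "HOL-Analysis.Analysis"
begin

text \<open>Numerator sin(2n asin sqrt t) * sinh(2m asinh sqrt(t/a)), made real for t < 0 by the
  convention sqrt t = i sqrt(-t), asin(iy) = i asinh y, asinh(iy) = i asin y:
  then the product equals (i sinh(2n asinh sqrt(-t))) (i sin(2m asin sqrt(-t/a))).\<close>
definition numer :: "nat \<Rightarrow> nat \<Rightarrow> real \<Rightarrow> real \<Rightarrow> real" where
  "numer n m a t =
     (if 0 \<le> t then sin (2 * real n * arcsin (sqrt t)) * sinh (2 * real m * arsinh (sqrt (t / a)))
      else - (sinh (2 * real n * arsinh (sqrt (- t))) * sin (2 * real m * arcsin (sqrt (- t / a)))))"

text \<open>Denominator base cos(2n asin sqrt t) + cosh(2m asinh sqrt(t/a)), with the same convention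
  (cos(i x) = cosh x, cosh(i x) = cos x).\<close>
definition denom :: "nat \<Rightarrow> nat \<Rightarrow> real \<Rightarrow> real \<Rightarrow> real" where
  "denom n m a t =
     (if 0 \<le> t then cos (2 * real n * arcsin (sqrt t)) + cosh (2 * real m * arsinh (sqrt (t / a)))
      else cosh (2 * real n * arsinh (sqrt (- t))) + cos (2 * real m * arcsin (sqrt (- t / a))))"

end

theory Submission
  imports Defs "HOL-Complex_Analysis.Complex_Analysis"
begin

(* Put E(t) = exp(2n i asin(sqrt t) - 2m asinh(sqrt(t/a))). Under the convention of the
   statement, numer/denom^2 = (1/2) Im(-((E - 1)/(E + 1))^2) on [-a,1], and E is real on the
   rest of the real line. With square roots cut along the negative imaginary axis, E extends to
   the closed upper half-plane, where |E| < 1 except at E(0) = 1, |E(t)| <= a^m/|t|^(n+m), and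
   (E - 1)^2/t stays continuous at 0. So G(t) = -((E - 1)/(E + 1))^2 t^j is continuous on the
   closed and holomorphic on the open half-plane, and G(t) = -t^j + O(|t|^-2) for j <= n+m-2.
   By Cauchy's theorem on the half-disc of radius R, the integral of Im G over [-R,R] is minus
   the imaginary part of the integral of G over the semicircle; as R grows, this tends to the
   imaginary part of the semicircle integral of t^j, which is pi for j = -1 and 0 otherwise. *)

lemma abs_Im_csqrt_le_Re:
  assumes "0 \<le> Re z" shows "\<bar>Im (csqrt z)\<bar> \<le> Re (csqrt z)"
proof -
  have "Re z = Re (csqrt z)^2 - Im (csqrt z)^2"
    using Re_power2[of "csqrt z"] by simp
  with assms have "Im (csqrt z)^2 \<le> Re (csqrt z)^2"
    by linarith
  with Re_csqrt[of z] show ?thesis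
    using power2_le_iff_abs_le by blast
qed

lemma abs_Im_csqrt_less_Re:
  assumes "0 < Re z" shows "\<bar>Im (csqrt z)\<bar> < Re (csqrt z)"
proof -
  have "Re z = Re (csqrt z)^2 - Im (csqrt z)^2"
    using Re_power2[of "csqrt z"] by simp
  with assms have "Im (csqrt z)^2 < Re (csqrt z)^2"
    by linarith
  with Re_csqrt[of z] show ?thesis
    by (metis abs_le_square_iff abs_of_nonneg not_le)
qed

lemma continuous_on_csqrt_Re_nonneg: "continuous_on {z. 0 \<le> Re z} csqrt"
proof (rule continuous_at_imp_continuous_on, safe)
  fix z :: complex assume z: "0 \<le> Re z"
  show "isCont csqrt z"
  proof (cases "z = 0")
    case True
    have "isCont (\<lambda>w::complex. sqrt (norm w)) 0" by (intro continuous_intros)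
    then have "((\<lambda>w. norm (csqrt w)) \<longlongrightarrow> 0) (at 0)" by (simp add: isCont_def)
    with True show ?thesis
      using tendsto_norm_zero_iff[of csqrt "at 0"] by (simp add: isCont_def)
  next
    case False
    with z have "z \<notin> \<real>\<^sub>\<le>\<^sub>0" by (auto simp: complex_nonpos_Reals_iff complex_eq_iff)
    then show ?thesis by (rule continuous_at_csqrt)
  qed
qed

lemma norm_add_ge_1_if_mult_diff_eq_1:
  fixes u v :: complex
  assumes "(u + v) * (v - u) = 1" "0 \<le> Re u * Re v + Im u * Im v"
  shows "1 \<le> norm (u + v)"
proof -
  have sq: "norm (u + v) ^ 2 = norm (v - u) ^ 2 + 4 * (Re u * Re v + Im u * Im v)"
    unfolding cmod_power2 by (simp only: plus_complex.sel minus_complex.sel) algebra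
  have "norm (v - u) ^ 2 \<le> norm (u + v) ^ 2"
    unfolding sq using assms(2) by simp
  then have "norm (v - u) \<le> norm (u + v)"
    by (rule power2_le_imp_le) simp
  then have "norm (u + v) * norm (v - u) \<le> norm (u + v) ^ 2"
    by (simp add: power2_eq_square mult_left_mono)
  moreover have "norm (u + v) * norm (v - u) = 1"
    using assms(1) by (metis norm_mult norm_one)
  ultimately have "1 ^ 2 \<le> norm (u + v) ^ 2"
    by simp
  then show ?thesis
    by (rule power2_le_imp_le) simp
qed

lemma norm_add_gt_1_if_mult_diff_eq_1:
  fixes u v :: complex
  assumes "(u + v) * (v - u) = 1" "0 < Re u * Re v + Im u * Im v"
  shows "1 < norm (u + v)"
proof -
  have sq: "norm (u + v) ^ 2 = norm (v - u) ^ 2 + 4 * (Re u * Re v + Im u * Im v)"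
    unfolding cmod_power2 by (simp only: plus_complex.sel minus_complex.sel) algebra
  have "norm (v - u) ^ 2 < norm (u + v) ^ 2"
    unfolding sq using assms(2) by simp
  then have "norm (v - u) < norm (u + v)"
    by (rule power2_less_imp_less) simp
  moreover have one: "norm (u + v) * norm (v - u) = 1"
    using assms(1) by (metis norm_mult norm_one)
  then have "0 < norm (u + v)"
    by (metis norm_ge_zero mult_zero_left order_le_less zero_neq_one)
  ultimately have "norm (u + v) * norm (v - u) < norm (u + v) ^ 2"
    by (simp add: power2_eq_square)
  with one have "1 ^ 2 < norm (u + v) ^ 2"
    by simp
  then show ?thesis
    by (rule power2_less_imp_less) simp
qed

lemma Im_minus_square_quot_cis_exp:
  fixes X Y :: real
  assumes "0 < Y"
  defines "E \<equiv> cis X * of_real (exp (- Y))"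
  shows "Im (- (((E - 1) / (E + 1)) ^ 2)) = 2 * sin X * sinh Y / (cos X + cosh Y) ^ 2"
proof -
  define e u where "e = exp (- Y)" and "u = exp Y"
  have eu: "e * u = 1"
    by (simp add: e_def u_def exp_minus)
  have ch: "cosh Y = (u + e) / 2" and sh: "sinh Y = (u - e) / 2"
    unfolding cosh_def sinh_def u_def e_def by (simp_all add: exp_minus)
  have cs: "cos X ^ 2 + sin X ^ 2 = 1"
    by simp
  have "cosh Y \<noteq> 1"
    using assms(1) by simp
  with cosh_real_ge_1[of Y] cos_ge_minus_one[of X] have D: "0 < cos X + cosh Y"
    by linarith
  have E: "E = Complex (e * cos X) (e * sin X)"
    by (simp add: E_def e_def complex_eq_iff)
  txt \<open>\<open>(E - 1) / (E + 1) = tanh ((\<i> * X - Y) / 2) = (\<i> * sin X - sinh Y) / (cos X + cosh Y)\<close>\<close>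
  have "(e * cos X + 1) * (- ((u - e) / 2)) - (e * sin X) * sin X = (e * cos X - 1) * (cos X + (u + e) / 2)"
    and "(e * cos X + 1) * sin X + (e * sin X) * (- ((u - e) / 2)) = (e * sin X) * (cos X + (u + e) / 2)"
    using eu cs by algebra+
  then have cross: "(E + 1) * Complex (- sinh Y) (sin X) = (E - 1) * of_real (cos X + cosh Y)"
    unfolding complex_eq_iff E ch sh by simp
  have "norm E < 1"
    using assms(1) by (simp add: E_def norm_mult)
  then have "E + 1 \<noteq> 0"
    by (metis add_eq_0_iff2 norm_minus_cancel norm_one order_less_irrefl)
  moreover have "complex_of_real (cos X + cosh Y) \<noteq> 0"
    using D by (simp only: of_real_eq_0_iff)
  ultimately have "(E - 1) / (E + 1) = Complex (- sinh Y) (sin X) / of_real (cos X + cosh Y)"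
    using cross by (simp add: frac_eq_eq mult.commute del: of_real_add)
  then show ?thesis
    by (simp add: power2_eq_square Im_divide_of_real field_simps)
qed

lemma norm_one_minus_square_quot_le:
  fixes E :: complex
  assumes "norm E \<le> 1 / 2"
  shows "norm (1 - ((E - 1) / (E + 1)) ^ 2) \<le> 16 * norm E"
proof -
  have "1 / 2 \<le> norm (E + 1)"
    using assms norm_diff_ineq[of 1 E] by (simp add: add.commute)
  then have "E + 1 \<noteq> 0" and "1 / 4 \<le> norm (E + 1) ^ 2"
    using power_mono[of "1 / 2" "norm (E + 1)" 2] by (auto simp: power2_eq_square)
  from \<open>E + 1 \<noteq> 0\<close> have "1 - ((E - 1) / (E + 1)) ^ 2 = 4 * E / (E + 1) ^ 2"
    by (simp add: divide_simps) algebra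
  also have "norm \<dots> = 4 * norm E / norm (E + 1) ^ 2"
    by (simp add: norm_divide norm_mult norm_power)
  also have "\<dots> \<le> 4 * norm E / (1 / 4)"
    using \<open>1 / 4 \<le> norm (E + 1) ^ 2\<close> by (intro divide_left_mono) auto
  finally show ?thesis
    by simp
qed

lemma has_contour_integral_power_div_part_circlepath:
  assumes "0 < R"
  obtains I where "((\<lambda>z. z ^ k / z) has_contour_integral I) (part_circlepath 0 R 0 pi)"
    and "Im I = (if k = 0 then pi else 0)"
proof (cases "k = 0")
  case True
  have "((\<lambda>s. \<i>) has_integral (\<i> * of_real pi)) {0..pi}"
    using has_integral_const_real[of \<i> 0 pi] by (simp add: scaleR_conv_of_real mult.commute)
  moreover have "(\<lambda>s. (of_real R * cis s) ^ 0 / (of_real R * cis s) * of_real R * \<i> * cis s) = (\<lambda>s. \<i>)"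
    using assms by (intro ext) (simp add: field_simps)
  ultimately have "((\<lambda>z. z ^ 0 / z) has_contour_integral (\<i> * of_real pi)) (part_circlepath 0 R 0 pi)"
    by (subst has_contour_integral_part_circlepath_iff) auto
  with True show ?thesis
    using that by simp
next
  case False
  have "((\<lambda>z. z ^ k / of_nat k) has_field_derivative z ^ (k - 1)) (at z within UNIV)" for z :: complex
    using False by (auto intro!: derivative_eq_intros)
  then have "((\<lambda>z. z ^ (k - 1)) has_contour_integral
               (pathfinish (part_circlepath 0 R 0 pi) ^ k / of_nat k - pathstart (part_circlepath 0 R 0 pi) ^ k / of_nat k))
             (part_circlepath 0 R 0 pi)"
    by (rule contour_integral_primitive) auto
  then have "((\<lambda>z. z ^ (k - 1)) has_contour_integral of_real (((- R) ^ k - R ^ k) / k)) (part_circlepath 0 R 0 pi)"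
    by (simp add: exp_pi_i' diff_divide_distrib flip: cis_conv_exp)
  moreover have "z ^ (k - 1) = z ^ k / z" if "z \<in> path_image (part_circlepath 0 R 0 pi)" for z
  proof -
    have "z \<noteq> 0"
      using that assms path_image_part_circlepath_subset[of 0 pi R 0] by auto
    with False show ?thesis
      by (cases k) auto
  qed
  ultimately have "((\<lambda>z. z ^ k / z) has_contour_integral of_real (((- R) ^ k - R ^ k) / k)) (part_circlepath 0 R 0 pi)"
    by (rule has_contour_integral_eq)
  with False show ?thesis
    using that by simp
qed

lemma path_image_upper_semicircle_subset:
  assumes "0 \<le> R"
  shows "path_image (part_circlepath 0 R 0 pi) \<subseteq> {z. 0 \<le> Im z \<and> norm z = R}"
proof
  fix z assume "z \<in> path_image (part_circlepath 0 R 0 pi)"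
  then obtain s where "0 \<le> s" "s \<le> pi" "z = of_real R * cis s"
    by (auto simp: path_image_part_circlepath cis_conv_exp)
  with assms show "z \<in> {z. 0 \<le> Im z \<and> norm z = R}"
    by (auto simp: norm_mult sin_ge_zero)
qed

lemma upper_half_disc_Cauchy:
  fixes f :: "complex \<Rightarrow> complex"
  assumes cont: "continuous_on {z. 0 \<le> Im z} f" and hol: "f holomorphic_on {z. 0 < Im z}"
    and "0 < R"
  shows "(f has_contour_integral 0)
           (linepath (complex_of_real (- R)) (complex_of_real R) +++ part_circlepath 0 R 0 pi)"
proof -
  define S where "S = cball 0 R \<inter> {z. 0 \<le> Im z}"
  define g1 g2 where "g1 = linepath (complex_of_real (- R)) (complex_of_real R)"
    and "g2 = part_circlepath 0 R 0 pi"
  have "convex S"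
    unfolding S_def by (intro convex_Int convex_cball convex_halfspace_Im_ge)
  have "complex_of_real (- R) \<in> S" "complex_of_real R \<in> S"
    using \<open>0 < R\<close> by (auto simp: S_def)
  then have img1: "path_image g1 \<subseteq> S"
    unfolding g1_def using \<open>convex S\<close> by (simp add: closed_segment_subset)
  have img2: "path_image g2 \<subseteq> S"
    using path_image_upper_semicircle_subset[of R] \<open>0 < R\<close> by (auto simp: S_def g2_def)
  have S_sub: "S \<subseteq> {z. 0 \<le> Im z}" and int_S: "interior S \<subseteq> {z. 0 < Im z}"
    using interior_mono[of S "{z. 0 \<le> Im z}"] interior_halfspace_ge[of \<i> 0]
    by (auto simp: S_def)
  have ends: "pathfinish g1 = pathstart g2" "pathfinish g2 = pathstart g1"
    by (simp_all add: g1_def g2_def exp_pi_i' flip: cis_conv_exp)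
  have "(f has_contour_integral 0) (g1 +++ g2)"
  proof (rule Cauchy_theorem_convex[where K = "{}"])
    show "continuous_on S f"
      using cont S_sub by (rule continuous_on_subset)
    show "f field_differentiable at z" if "z \<in> interior S - {}" for z
      using that int_S holomorphic_on_imp_differentiable_at[OF hol open_halfspace_Im_gt] by auto
    show "path_image (g1 +++ g2) \<subseteq> S"
      using img1 img2 path_image_join[OF ends(1)] by auto
  qed (use \<open>convex S\<close> ends in \<open>auto simp: g1_def g2_def intro: valid_path_join\<close>)
  then show ?thesis
    by (simp add: g1_def g2_def)
qed

lemma upper_half_disc_line_integral:
  fixes f :: "complex \<Rightarrow> complex"
  assumes cont: "continuous_on {z. 0 \<le> Im z} f" and hol: "f holomorphic_on {z. 0 < Im z}"
    and "0 < R"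
  obtains L where "((\<lambda>x. f (of_real x)) has_integral L) {-R..R}"
    and "(f has_contour_integral - L) (part_circlepath 0 R 0 pi)"
proof -
  define g1 g2 where "g1 = linepath (complex_of_real (- R)) (complex_of_real R)"
    and "g2 = part_circlepath 0 R 0 pi"
  have Cauchy: "(f has_contour_integral 0) (g1 +++ g2)"
    unfolding g1_def g2_def using cont hol \<open>0 < R\<close> by (rule upper_half_disc_Cauchy)
  have valid: "valid_path g1" "valid_path g2"
    by (simp_all add: g1_def g2_def)
  with Cauchy have "f contour_integrable_on g1" "f contour_integrable_on g2"
    using contour_integrable_joinD1 contour_integrable_joinD2 has_contour_integral_integrable
    by blast+
  then obtain L C where L: "(f has_contour_integral L) g1" and C: "(f has_contour_integral C) g2"
    using has_contour_integral_integral by blast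
  have "L + C = 0"
    using has_contour_integral_unique[OF has_contour_integral_join[OF L C valid] Cauchy] .
  then have "C = - L"
    by (simp add: eq_neg_iff_add_eq_0 add.commute)
  with C have "(f has_contour_integral - L) g2"
    by simp
  moreover have "((\<lambda>x. f (of_real x)) has_integral L) {-R..R}"
    using L has_contour_integral_linepath_Reals_iff[of "complex_of_real (- R)" "complex_of_real R" f L]
      \<open>0 < R\<close>
    by (simp add: g1_def)
  ultimately show ?thesis
    using that by (simp add: g2_def)
qed

lemma Im_integral_upper_half_disc_estimate:
  fixes f q :: "complex \<Rightarrow> complex"
  assumes cont: "continuous_on {z. 0 \<le> Im z} f" and hol: "f holomorphic_on {z. 0 < Im z}"
    and R: "0 < R" "-R \<le> c" "c \<le> d" "d \<le> R"
    and real_outside: "\<And>x. x \<notin> {c..d} \<Longrightarrow> Im (f (of_real x)) = 0"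
    and q: "(q has_contour_integral I) (part_circlepath 0 R 0 pi)"
    and bound: "0 \<le> B" "\<And>z. z \<in> path_image (part_circlepath 0 R 0 pi) \<Longrightarrow> norm (f z + q z) \<le> B"
  shows "\<bar>integral {c..d} (\<lambda>x. Im (f (of_real x))) - Im I\<bar> \<le> B * R * pi"
proof -
  define h where "h = (\<lambda>x. Im (f (of_real x)))"
  define V where "V = integral {c..d} h"
  have "continuous_on {c..d} (\<lambda>x. f (of_real x))"
    by (rule continuous_on_compose2[OF cont continuous_on_of_real]) auto
  then have V: "(h has_integral V) {c..d}"
    unfolding V_def h_def by (intro integrable_integral integrable_continuous_real continuous_intros)
  obtain L where L: "((\<lambda>x. f (of_real x)) has_integral L) {-R..R}"
    and arc_f: "(f has_contour_integral - L) (part_circlepath 0 R 0 pi)"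
    using upper_half_disc_line_integral[OF cont hol R(1)] by blast
  have "(h has_integral 0) {-R..c}"
    by (rule has_integral_spike_finite[of "{c}" _ _ "\<lambda>_. 0"]) (auto simp: h_def real_outside)
  moreover have "(h has_integral 0) {d..R}"
    by (rule has_integral_spike_finite[of "{d}" _ _ "\<lambda>_. 0"]) (auto simp: h_def real_outside)
  ultimately have "(h has_integral 0 + V + 0) {-R..R}"
    using V R by (intro has_integral_combine[of _ d] has_integral_combine[of _ c]) auto
  then have "(h has_integral V) {-R..R}"
    by simp
  moreover have "(h has_integral Im L) {-R..R}"
    unfolding h_def using L by (rule has_integral_Im)
  ultimately have "V = Im L"
    by (rule has_integral_unique)
  have "((\<lambda>z. f z + q z) has_contour_integral (- L + I)) (part_circlepath 0 R 0 pi)"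
    using arc_f q by (rule has_contour_integral_add)
  then have "norm (- L + I) \<le> B * R * (pi - 0)"
    by (rule has_contour_integral_bound_part_circlepath) (use R bound in auto)
  moreover have "\<bar>V - Im I\<bar> \<le> norm (- L + I)"
    using abs_Im_le_cmod[of "- L + I"] \<open>V = Im L\<close> by simp
  ultimately show ?thesis
    by (simp add: V_def h_def)
qed

lemma Im_has_integral_by_upper_half_disc:
  fixes f q :: "complex \<Rightarrow> complex"
  assumes cont: "continuous_on {z. 0 \<le> Im z} f" and hol: "f holomorphic_on {z. 0 < Im z}"
    and "c \<le> d" and real_outside: "\<And>x. x \<notin> {c..d} \<Longrightarrow> Im (f (of_real x)) = 0"
    and arc: "\<And>R. R\<^sub>0 \<le> R \<Longrightarrow> \<exists>I. (q has_contour_integral I) (part_circlepath 0 R 0 pi) \<and> Im I = v"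
    and approx: "\<And>z. 0 \<le> Im z \<Longrightarrow> R\<^sub>0 \<le> norm z \<Longrightarrow> norm (f z + q z) \<le> C / norm z ^ 2"
  shows "((\<lambda>x. Im (f (of_real x))) has_integral v) {c..d}"
proof -
  define V where "V = integral {c..d} (\<lambda>x. Im (f (of_real x)))"
  have bound: "\<bar>V - v\<bar> \<le> \<bar>C\<bar> * pi / R" if R: "max (max 1 R\<^sub>0) (max \<bar>c\<bar> \<bar>d\<bar>) \<le> R" for R
  proof -
    have "0 < R" "R\<^sub>0 \<le> R" "-R \<le> c" "d \<le> R"
      using R by auto
    obtain I where I: "(q has_contour_integral I) (part_circlepath 0 R 0 pi)" "Im I = v"
      using arc[OF \<open>R\<^sub>0 \<le> R\<close>] by blast
    have "\<bar>V - Im I\<bar> \<le> \<bar>C\<bar> / R ^ 2 * R * pi"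
      unfolding V_def
    proof (rule Im_integral_upper_half_disc_estimate[OF cont hol _ _ _ _ _ I(1)])
      fix z assume "z \<in> path_image (part_circlepath 0 R 0 pi)"
      then have "0 \<le> Im z" "norm z = R"
        using path_image_upper_semicircle_subset[of R] \<open>0 < R\<close> by auto
      then have "norm (f z + q z) \<le> C / R ^ 2"
        using approx[of z] \<open>R\<^sub>0 \<le> R\<close> by simp
      also have "\<dots> \<le> \<bar>C\<bar> / R ^ 2"
        by (rule divide_right_mono) simp_all
      finally show "norm (f z + q z) \<le> \<bar>C\<bar> / R ^ 2" .
    qed (use \<open>0 < R\<close> \<open>-R \<le> c\<close> \<open>c \<le> d\<close> \<open>d \<le> R\<close> real_outside in simp_all)
    with I(2) \<open>0 < R\<close> show ?thesis
      by (simp add: power2_eq_square)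
  qed
  have "((\<lambda>R. \<bar>C\<bar> * pi / R) \<longlongrightarrow> 0) at_top"
    by (intro tendsto_divide_0[OF tendsto_const] filterlim_at_top_imp_at_infinity filterlim_ident)
  moreover have "eventually (\<lambda>R. \<bar>V - v\<bar> \<le> \<bar>C\<bar> * pi / R) at_top"
    by (rule eventually_at_top_linorderI) (rule bound)
  ultimately have "\<bar>V - v\<bar> \<le> 0"
    by (rule tendsto_lowerbound) simp
  moreover have "continuous_on {c..d} (\<lambda>x. f (of_real x))"
    by (rule continuous_on_compose2[OF cont continuous_on_of_real]) auto
  then have "((\<lambda>x. Im (f (of_real x))) has_integral V) {c..d}"
    unfolding V_def by (intro integrable_integral integrable_continuous_real continuous_intros)
  ultimately show ?thesis
    by simp
qed

section \<open>A square root on the closed upper half-plane\<close>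

text \<open>A square root with its branch cut on the negative imaginary axis.\<close>
definition upper_sqrt :: "complex \<Rightarrow> complex" where
  "upper_sqrt z = csqrt \<i> * csqrt (- \<i> * z)"

lemma upper_sqrt_square [simp]: "upper_sqrt z ^ 2 = z"
  by (simp add: upper_sqrt_def power_mult_distrib del: csqrt_ii)

lemma norm_upper_sqrt [simp]: "norm (upper_sqrt z) = sqrt (norm z)"
  by (simp add: upper_sqrt_def norm_mult del: csqrt_ii)

lemma Re_Im_csqrt_i_mult:
  "Re (csqrt \<i> * w) = (Re w - Im w) / sqrt 2" "Im (csqrt \<i> * w) = (Re w + Im w) / sqrt 2"
  by (simp_all add: field_simps)

lemma upper_sqrt_first_quadrant:
  assumes "0 \<le> Im z" shows "0 \<le> Re (upper_sqrt z)" "0 \<le> Im (upper_sqrt z)"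
  using abs_Im_csqrt_le_Re[of "- \<i> * z"] assms
  by (auto simp: upper_sqrt_def Re_Im_csqrt_i_mult abs_le_iff)

lemma upper_sqrt_open_first_quadrant:
  assumes "0 < Im z" shows "0 < Re (upper_sqrt z)" "0 < Im (upper_sqrt z)"
  using abs_Im_csqrt_less_Re[of "- \<i> * z"] assms
  by (auto simp: upper_sqrt_def Re_Im_csqrt_i_mult abs_less_iff)

lemma upper_sqrt_add_nonzero:
  assumes "0 \<le> Im z" "0 < Re c \<or> 0 < Im c" shows "upper_sqrt z + c \<noteq> 0"
  using upper_sqrt_first_quadrant[OF assms(1)] assms(2) by (auto simp: complex_eq_iff)

lemma upper_sqrt_unique:
  assumes "w ^ 2 = z" "0 \<le> Re w" "0 \<le> Im w" shows "upper_sqrt z = w"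
proof -
  have "csqrt (- \<i> * z) = cnj (csqrt \<i>) * w"
  proof (rule csqrt_unique)
    show "(cnj (csqrt \<i>) * w)\<^sup>2 = - \<i> * z"
      by (simp add: power_mult_distrib assms(1) del: csqrt_ii flip: complex_cnj_power)
    show "0 < Re (cnj (csqrt \<i>) * w) \<or> Re (cnj (csqrt \<i>) * w) = 0 \<and> 0 \<le> Im (cnj (csqrt \<i>) * w)"
      using assms(2,3) by (auto simp: field_simps)
  qed
  moreover have "csqrt \<i> * cnj (csqrt \<i>) = 1"
    using complex_norm_square[of "csqrt \<i>"] by (simp del: csqrt_ii)
  ultimately show ?thesis by (simp add: upper_sqrt_def mult.assoc[symmetric])
qed

lemma upper_sqrt_of_real_nonneg: "0 \<le> x \<Longrightarrow> upper_sqrt (of_real x) = of_real (sqrt x)"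
  by (rule upper_sqrt_unique) (auto simp flip: of_real_power)

lemma upper_sqrt_of_real_nonpos: "x \<le> 0 \<Longrightarrow> upper_sqrt (of_real x) = \<i> * of_real (sqrt (- x))"
  by (rule upper_sqrt_unique) (auto simp: power_mult_distrib simp flip: of_real_power)

lemma upper_sqrt_divide_real:
  assumes "0 \<le> Im z" "0 < c"
  shows "upper_sqrt (z / of_real c) = upper_sqrt z / of_real (sqrt c)"
  using upper_sqrt_first_quadrant[OF assms(1)] assms(2)
  by (intro upper_sqrt_unique) (auto simp: power_divide simp flip: of_real_power)

lemma upper_sqrt_diff:
  assumes "upper_sqrt z + c \<noteq> 0"
  shows "upper_sqrt z - c = (z - c ^ 2) / (upper_sqrt z + c)"
proof -
  have "(upper_sqrt z - c) * (upper_sqrt z + c) = upper_sqrt z ^ 2 - c ^ 2"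
    by (simp only: power2_eq_square algebra_simps)
  then have "z - c ^ 2 = (upper_sqrt z - c) * (upper_sqrt z + c)"
    by simp
  with assms show ?thesis
    by (simp only: nonzero_mult_div_cancel_right not_False_eq_True)
qed

lemma continuous_on_upper_sqrt [continuous_intros]:
  assumes "continuous_on S f" "\<And>z. z \<in> S \<Longrightarrow> 0 \<le> Im (f z)"
  shows "continuous_on S (\<lambda>z. upper_sqrt (f z))"
proof -
  have "continuous_on S (\<lambda>z. csqrt (- \<i> * f z))"
    by (rule continuous_on_compose2[OF continuous_on_csqrt_Re_nonneg]) 
       (use assms in \<open>auto intro!: continuous_intros\<close>)
  then show ?thesis unfolding upper_sqrt_def by (intro continuous_intros)
qed

lemma holomorphic_on_upper_sqrt [holomorphic_intros]:
  assumes "f holomorphic_on S" "\<And>z. z \<in> S \<Longrightarrow> 0 < Im (f z)"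
  shows "(\<lambda>z. upper_sqrt (f z)) holomorphic_on S"
  unfolding upper_sqrt_def
  by (intro holomorphic_intros assms) (use assms(2) in \<open>fastforce simp: complex_nonpos_Reals_iff\<close>)

section \<open>Continuation of the two phases\<close>

text \<open>The continuation of \<open>exp (arsinh (sqrt w))\<close> from \<open>w \<ge> 0\<close>; on \<open>[-1, 0]\<close> it takes the
  values \<open>exp (\<i> * arcsin (sqrt (- w)))\<close> prescribed by the convention of the statement.\<close>
definition exp_arsinh_sqrt :: "complex \<Rightarrow> complex" where
  "exp_arsinh_sqrt w = upper_sqrt w + upper_sqrt (w + 1)"

lemma exp_arsinh_sqrt_mult_diff: "exp_arsinh_sqrt w * (upper_sqrt (w + 1) - upper_sqrt w) = 1"
proof -
  have "exp_arsinh_sqrt w * (upper_sqrt (w + 1) - upper_sqrt w)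
          = upper_sqrt (w + 1) ^ 2 - upper_sqrt w ^ 2"
    by (simp add: exp_arsinh_sqrt_def power2_eq_square algebra_simps)
  then show ?thesis by simp
qed

lemma exp_arsinh_sqrt_nonzero [simp]: "exp_arsinh_sqrt w \<noteq> 0"
  using exp_arsinh_sqrt_mult_diff[of w] by auto

lemma norm_exp_arsinh_sqrt_ge_1:
  assumes "0 \<le> Im w" shows "1 \<le> norm (exp_arsinh_sqrt w)"
  using upper_sqrt_first_quadrant[OF assms] upper_sqrt_first_quadrant[of "w + 1"] assms
  unfolding exp_arsinh_sqrt_def
  by (intro norm_add_ge_1_if_mult_diff_eq_1) (auto simp: exp_arsinh_sqrt_mult_diff[unfolded exp_arsinh_sqrt_def])

lemma one_less_norm_exp_arsinh_sqrt:
  assumes "0 \<le> Im w" "w \<notin> of_real ` {-1..0}" shows "1 < norm (exp_arsinh_sqrt w)"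
proof -
  define u v where "u = upper_sqrt w" and "v = upper_sqrt (w + 1)"
  have "0 < Re u * Re v + Im u * Im v"
  proof (cases "Im w = 0")
    case True
    define x where "x = Re w"
    with True have x: "w = of_real x" by (simp add: complex_eq_iff)
    with assms(2) consider "0 < x" | "x < -1" by force
    then show ?thesis
    proof cases
      case 1
      then have "u = of_real (sqrt x)" "v = of_real (sqrt (x + 1))"
        using upper_sqrt_of_real_nonneg[of x] upper_sqrt_of_real_nonneg[of "x + 1"] by (simp_all add: u_def v_def x)
      with 1 show ?thesis by simp
    next
      case 2
      then have "u = \<i> * of_real (sqrt (- x))" "v = \<i> * of_real (sqrt (- x - 1))"
        using upper_sqrt_of_real_nonpos[of x] upper_sqrt_of_real_nonpos[of "x + 1"] by (simp_all add: u_def v_def x)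
      with 2 show ?thesis by simp
    qed
  next
    case False
    with assms(1) have "0 < Im w" "0 < Im (w + 1)" by auto
    then show ?thesis
      using upper_sqrt_open_first_quadrant u_def v_def by (simp add: add_pos_pos)
  qed
  moreover have "(u + v) * (v - u) = 1"
    using exp_arsinh_sqrt_mult_diff[of w] by (simp add: exp_arsinh_sqrt_def u_def v_def)
  ultimately have "1 < norm (u + v)"
    using norm_add_gt_1_if_mult_diff_eq_1 by blast
  then show ?thesis
    by (simp add: exp_arsinh_sqrt_def u_def v_def)
qed

lemma sqrt_norm_le_norm_exp_arsinh_sqrt:
  assumes "0 \<le> Im w"
  shows "sqrt (norm w) \<le> norm (exp_arsinh_sqrt w)" "sqrt (norm (w + 1)) \<le> norm (exp_arsinh_sqrt w)"
proof -
  define h g where "h = exp_arsinh_sqrt w" and "g = upper_sqrt (w + 1) - upper_sqrt w"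
  have h1: "1 \<le> norm h" unfolding h_def using assms by (rule norm_exp_arsinh_sqrt_ge_1)
  have "norm h * norm g = 1"
    using exp_arsinh_sqrt_mult_diff[of w] unfolding h_def g_def by (metis norm_mult norm_one)
  moreover have "h \<noteq> 0"
    using h1 by auto
  ultimately have "norm g = 1 / norm h"
    by (simp add: eq_divide_eq mult.commute)
  with h1 have g1: "norm g \<le> 1"
    by (simp add: divide_le_eq)
  have "h = 2 * upper_sqrt w + g" "h = 2 * upper_sqrt (w + 1) - g"
    unfolding h_def g_def exp_arsinh_sqrt_def by simp_all
  then have "norm (2 * upper_sqrt w) \<le> norm h + norm g" "norm (2 * upper_sqrt (w + 1)) \<le> norm h + norm g"
    using norm_triangle_ineq4[of h g] norm_triangle_ineq[of h g] by simp_all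
  with g1 have "2 * sqrt (norm w) - 1 \<le> norm h" "2 * sqrt (norm (w + 1)) - 1 \<le> norm h"
    by (simp_all add: norm_mult)
  with h1 show "sqrt (norm w) \<le> norm (exp_arsinh_sqrt w)" "sqrt (norm (w + 1)) \<le> norm (exp_arsinh_sqrt w)"
    unfolding h_def by linarith+
qed

lemma exp_arsinh_real_sqrt:
  assumes "0 \<le> x" shows "exp (arsinh (sqrt x)) = sqrt x + sqrt (x + 1)"
proof -
  have "exp (arsinh (sqrt x)) = sqrt x + sqrt ((sqrt x)\<^sup>2 + 1)"
    unfolding arsinh_real_def using arsinh_real_aux[of "sqrt x"] by (rule exp_ln)
  with assms show ?thesis
    by simp
qed

lemma exp_arsinh_sqrt_of_real_nonneg:
  assumes "0 \<le> x" shows "exp_arsinh_sqrt (of_real x) = of_real (exp (arsinh (sqrt x)))"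
proof -
  have "upper_sqrt (of_real x + 1) = of_real (sqrt (x + 1))"
    using upper_sqrt_of_real_nonneg[of "x + 1"] assms by simp
  with assms show ?thesis
    by (simp add: exp_arsinh_sqrt_def upper_sqrt_of_real_nonneg exp_arsinh_real_sqrt)
qed

lemma exp_arsinh_sqrt_of_real_ge_minus_1:
  assumes "-1 \<le> x" "x \<le> 0" shows "exp_arsinh_sqrt (of_real x) = cis (arcsin (sqrt (- x)))"
proof -
  have "0 \<le> sqrt (- x)" "sqrt (- x) \<le> 1"
    using assms by simp_all
  then have bounds: "-1 \<le> sqrt (- x)" "sqrt (- x) \<le> 1"
    by linarith+
  have "upper_sqrt (of_real x + 1) = of_real (sqrt (1 + x))"
    using assms upper_sqrt_of_real_nonneg[of "x + 1"] by (simp add: add.commute)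
  moreover have "cos (arcsin (sqrt (- x))) = sqrt (1 + x)"
    using cos_arcsin[OF bounds] assms by simp
  moreover have "sin (arcsin (sqrt (- x))) = sqrt (- x)"
    using sin_arcsin[OF bounds] .
  ultimately show ?thesis
    using assms by (simp add: exp_arsinh_sqrt_def upper_sqrt_of_real_nonpos complex_eq_iff)
qed

lemma exp_arsinh_sqrt_of_real_le_minus_1:
  assumes "x \<le> -1" shows "exp_arsinh_sqrt (of_real x) = \<i> * of_real (sqrt (- x) + sqrt (- x - 1))"
proof -
  have "upper_sqrt (of_real x + 1) = \<i> * of_real (sqrt (- x - 1))"
    using assms upper_sqrt_of_real_nonpos[of "x + 1"] by simp
  with assms show ?thesis
    by (simp add: exp_arsinh_sqrt_def upper_sqrt_of_real_nonpos algebra_simps)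
qed

lemma exp_arsinh_sqrt_minus_1:
  assumes "0 \<le> Im w"
  shows "exp_arsinh_sqrt w - 1 = upper_sqrt w * (1 + upper_sqrt w / (upper_sqrt (w + 1) + 1))"
proof -
  have "upper_sqrt (w + 1) + 1 \<noteq> 0"
    using assms by (intro upper_sqrt_add_nonzero) auto
  then have diff: "upper_sqrt (w + 1) - 1 = upper_sqrt w ^ 2 / (upper_sqrt (w + 1) + 1)"
    by (simp add: upper_sqrt_diff)
  have "upper_sqrt w * (1 + upper_sqrt w / (upper_sqrt (w + 1) + 1))
          = upper_sqrt w + upper_sqrt w ^ 2 / (upper_sqrt (w + 1) + 1)"
    by (simp add: distrib_left power2_eq_square)
  also have "\<dots> = upper_sqrt w + (upper_sqrt (w + 1) - 1)"
    by (simp only: diff)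
  also have "\<dots> = exp_arsinh_sqrt w - 1"
    by (simp add: exp_arsinh_sqrt_def)
  finally show ?thesis ..
qed

lemma continuous_on_exp_arsinh_sqrt [continuous_intros]:
  "continuous_on S f \<Longrightarrow> (\<And>z. z \<in> S \<Longrightarrow> 0 \<le> Im (f z)) \<Longrightarrow> continuous_on S (\<lambda>z. exp_arsinh_sqrt (f z))"
  unfolding exp_arsinh_sqrt_def by (intro continuous_intros) auto

lemma holomorphic_on_exp_arsinh_sqrt [holomorphic_intros]:
  "f holomorphic_on S \<Longrightarrow> (\<And>z. z \<in> S \<Longrightarrow> 0 < Im (f z)) \<Longrightarrow> (\<lambda>z. exp_arsinh_sqrt (f z)) holomorphic_on S"
  unfolding exp_arsinh_sqrt_def by (intro holomorphic_intros) auto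

definition exp_i_arcsin_sqrt :: "complex \<Rightarrow> complex" where
  "exp_i_arcsin_sqrt t = \<i> * (upper_sqrt t - upper_sqrt (t - 1))"

lemma exp_i_arcsin_sqrt_mult: "exp_i_arcsin_sqrt t * exp_arsinh_sqrt (t - 1) = \<i>"
  using exp_arsinh_sqrt_mult_diff[of "t - 1"] by (simp add: exp_i_arcsin_sqrt_def mult.commute)

lemma norm_exp_i_arcsin_sqrt: "norm (exp_i_arcsin_sqrt t) = 1 / norm (exp_arsinh_sqrt (t - 1))"
proof -
  have "norm (exp_i_arcsin_sqrt t) * norm (exp_arsinh_sqrt (t - 1)) = 1"
    using arg_cong[OF exp_i_arcsin_sqrt_mult[of t], of norm] by (simp add: norm_mult)
  then show ?thesis
    by (simp add: eq_divide_eq)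
qed

lemma exp_i_arcsin_sqrt_of_real_unit:
  assumes "0 \<le> x" "x \<le> 1" shows "exp_i_arcsin_sqrt (of_real x) = cis (arcsin (sqrt x))"
proof -
  have "0 \<le> sqrt x" "sqrt x \<le> 1"
    using assms by simp_all
  then have bounds: "-1 \<le> sqrt x" "sqrt x \<le> 1"
    by linarith+
  have "upper_sqrt (of_real x - 1) = \<i> * of_real (sqrt (1 - x))"
    using assms upper_sqrt_of_real_nonpos[of "x - 1"] by simp
  moreover have "cos (arcsin (sqrt x)) = sqrt (1 - x)"
    using cos_arcsin[OF bounds] assms by simp
  moreover have "sin (arcsin (sqrt x)) = sqrt x"
    using sin_arcsin[OF bounds] .
  ultimately show ?thesis
    using assms by (simp add: exp_i_arcsin_sqrt_def upper_sqrt_of_real_nonneg complex_eq_iff)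
qed

lemma exp_i_arcsin_sqrt_of_real_nonpos:
  assumes "x \<le> 0" shows "exp_i_arcsin_sqrt (of_real x) = of_real (exp (- arsinh (sqrt (- x))))"
proof -
  have "upper_sqrt (of_real x - 1) = \<i> * of_real (sqrt (1 - x))"
    using assms upper_sqrt_of_real_nonpos[of "x - 1"] by simp
  moreover have "exp (- arsinh (sqrt (- x))) = sqrt (1 - x) - sqrt (- x)"
  proof -
    have "(sqrt (- x) + sqrt (1 - x)) * (sqrt (1 - x) - sqrt (- x)) = sqrt (1 - x) ^ 2 - sqrt (- x) ^ 2"
      by (simp add: algebra_simps power2_eq_square)
    also have "\<dots> = 1"
      using assms by simp
    finally have inverse: "(sqrt (- x) + sqrt (1 - x)) * (sqrt (1 - x) - sqrt (- x)) = 1" .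
    have "0 \<le> sqrt (- x)" "0 < sqrt (1 - x)"
      using assms by simp_all
    then have "sqrt (- x) + sqrt (1 - x) \<noteq> 0"
      by linarith
    moreover have "exp (- arsinh (sqrt (- x))) = 1 / (sqrt (- x) + sqrt (1 - x))"
      using exp_arsinh_real_sqrt[of "- x"] assms by (simp add: exp_minus inverse_eq_divide)
    ultimately show ?thesis
      using inverse by (simp add: divide_eq_eq mult.commute)
  qed
  ultimately show ?thesis
    using assms by (simp add: exp_i_arcsin_sqrt_def upper_sqrt_of_real_nonpos complex_eq_iff)
qed

lemma exp_i_arcsin_sqrt_of_real_ge_1:
  assumes "1 \<le> x" shows "exp_i_arcsin_sqrt (of_real x) = \<i> * of_real (sqrt x - sqrt (x - 1))"
proof -
  have "upper_sqrt (of_real x - 1) = of_real (sqrt (x - 1))"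
    using assms upper_sqrt_of_real_nonneg[of "x - 1"] by simp
  with assms show ?thesis
    by (simp add: exp_i_arcsin_sqrt_def upper_sqrt_of_real_nonneg)
qed

lemma exp_i_arcsin_sqrt_minus_1:
  assumes "0 \<le> Im t"
  shows "exp_i_arcsin_sqrt t - 1 = \<i> * upper_sqrt t * (1 - upper_sqrt t / (upper_sqrt (t - 1) + \<i>))"
proof -
  have "upper_sqrt (t - 1) + \<i> \<noteq> 0"
    using assms by (intro upper_sqrt_add_nonzero) auto
  then have diff: "upper_sqrt (t - 1) - \<i> = upper_sqrt t ^ 2 / (upper_sqrt (t - 1) + \<i>)"
    by (simp add: upper_sqrt_diff)
  have "\<i> * upper_sqrt t * (1 - upper_sqrt t / (upper_sqrt (t - 1) + \<i>))
          = \<i> * upper_sqrt t - \<i> * (upper_sqrt t ^ 2 / (upper_sqrt (t - 1) + \<i>))"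
    by (simp add: right_diff_distrib power2_eq_square)
  also have "\<dots> = \<i> * upper_sqrt t - \<i> * (upper_sqrt (t - 1) - \<i>)"
    by (simp only: diff)
  also have "\<dots> = exp_i_arcsin_sqrt t - 1"
    by (simp add: exp_i_arcsin_sqrt_def right_diff_distrib)
  finally show ?thesis ..
qed

lemma continuous_on_exp_i_arcsin_sqrt [continuous_intros]:
  "continuous_on S f \<Longrightarrow> (\<And>z. z \<in> S \<Longrightarrow> 0 \<le> Im (f z)) \<Longrightarrow> continuous_on S (\<lambda>z. exp_i_arcsin_sqrt (f z))"
  unfolding exp_i_arcsin_sqrt_def by (intro continuous_intros) auto

lemma holomorphic_on_exp_i_arcsin_sqrt [holomorphic_intros]:
  "f holomorphic_on S \<Longrightarrow> (\<And>z. z \<in> S \<Longrightarrow> 0 < Im (f z)) \<Longrightarrow> (\<lambda>z. exp_i_arcsin_sqrt (f z)) holomorphic_on S"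
  unfolding exp_i_arcsin_sqrt_def by (intro holomorphic_intros) auto

section \<open>The contour integrand\<close>

definition exp_phase :: "nat \<Rightarrow> nat \<Rightarrow> real \<Rightarrow> complex \<Rightarrow> complex" where
  "exp_phase n m a t = exp_i_arcsin_sqrt t ^ (2 * n) / exp_arsinh_sqrt (t / of_real a) ^ (2 * m)"

lemma exp_phase_0 [simp]: "exp_phase n m a 0 = 1"
  using exp_i_arcsin_sqrt_of_real_nonpos[of 0] exp_arsinh_sqrt_of_real_nonneg[of 0]
  by (simp add: exp_phase_def)

lemma norm_exp_phase:
  "norm (exp_phase n m a t) = norm (exp_i_arcsin_sqrt t) ^ (2 * n) / norm (exp_arsinh_sqrt (t / of_real a)) ^ (2 * m)"
  by (simp add: exp_phase_def norm_divide norm_power)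

lemma norm_exp_phase_less_1:
  assumes "0 < n" "0 < m" "0 < a" "0 \<le> Im t" "t \<noteq> 0"
  shows "norm (exp_phase n m a t) < 1"
proof -
  define p q where "p = norm (exp_i_arcsin_sqrt t)" and "q = norm (exp_arsinh_sqrt (t / of_real a))"
  have "0 \<le> Im (t - 1)" "0 \<le> Im (t / of_real a)" using assms by simp_all
  then have "1 \<le> norm (exp_arsinh_sqrt (t - 1))" and q1: "1 \<le> q"
    using norm_exp_arsinh_sqrt_ge_1 by (auto simp: q_def)
  then have p1: "p \<le> 1" and p0: "0 \<le> p" by (simp_all add: p_def norm_exp_i_arcsin_sqrt divide_le_eq)
  have "p < 1 \<or> 1 < q"
  proof (cases "t \<in> of_real ` {0..1}")
    case True
    then obtain x where x: "t = of_real x" "0 \<le> x" by auto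
    with assms have "0 < x / a" by auto
    then have "t / of_real a \<notin> of_real ` {-1..0}" by (auto simp: x simp flip: of_real_divide)
    then show ?thesis using one_less_norm_exp_arsinh_sqrt assms by (auto simp: q_def)
  next
    case False
    have "t - 1 \<notin> of_real ` {-1..0}"
    proof
      assume "t - 1 \<in> of_real ` {-1..0}"
      then obtain y where "t - 1 = of_real y" "-1 \<le> y" "y \<le> 0" by auto
      then have "t = of_real (y + 1)" "y + 1 \<in> {0..1}" by (simp_all add: diff_eq_eq)
      with False show False by blast
    qed
    then have "1 < norm (exp_arsinh_sqrt (t - 1))" using one_less_norm_exp_arsinh_sqrt assms by simp
    then show ?thesis by (simp add: p_def norm_exp_i_arcsin_sqrt divide_less_eq)
  qed
  then have "p ^ (2 * n) < 1 \<or> 1 < q ^ (2 * m)"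
    using assms(1,2) p0 by (auto simp: power_less_one_iff one_less_power)
  moreover have "p ^ (2 * n) \<le> 1" "1 \<le> q ^ (2 * m)" using p0 p1 q1 by (simp_all add: power_le_one)
  ultimately show ?thesis
    unfolding norm_exp_phase p_def[symmetric] q_def[symmetric] by (auto simp: divide_less_eq)
qed

lemma exp_phase_plus_1_nonzero:
  assumes "0 < n" "0 < m" "0 < a" "0 \<le> Im t"
  shows "exp_phase n m a t + 1 \<noteq> 0"
proof (cases "t = 0")
  case False
  with norm_exp_phase_less_1[OF assms] have "exp_phase n m a t \<noteq> - 1" by auto
  then show ?thesis by (metis add_eq_0_iff2)
qed simp

lemma norm_exp_phase_le:
  assumes "0 < a" "0 \<le> Im t" "t \<noteq> 0"
  shows "norm (exp_phase n m a t) \<le> a ^ m / norm t ^ (n + m)"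
proof -
  have "sqrt (norm t) \<le> norm (exp_arsinh_sqrt (t - 1))"
    using sqrt_norm_le_norm_exp_arsinh_sqrt(2)[of "t - 1"] assms by simp
  then have "norm (exp_i_arcsin_sqrt t) \<le> 1 / sqrt (norm t)"
    using assms(3) by (simp add: norm_exp_i_arcsin_sqrt frac_le)
  then have "norm (exp_i_arcsin_sqrt t) ^ (2 * n) \<le> (1 / sqrt (norm t)) ^ (2 * n)"
    by (rule power_mono) simp
  also have "\<dots> = 1 / norm t ^ n"
    by (simp add: power_mult power_divide)
  finally have P: "norm (exp_i_arcsin_sqrt t) ^ (2 * n) \<le> 1 / norm t ^ n" .
  have "sqrt (norm t / a) \<le> norm (exp_arsinh_sqrt (t / of_real a))"
    using sqrt_norm_le_norm_exp_arsinh_sqrt(1)[of "t / of_real a"] assms by (simp add: norm_divide)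
  then have "sqrt (norm t / a) ^ (2 * m) \<le> norm (exp_arsinh_sqrt (t / of_real a)) ^ (2 * m)"
    by (rule power_mono) (simp add: assms(1) less_imp_le)
  moreover have "sqrt (norm t / a) ^ (2 * m) = (norm t / a) ^ m"
    using assms(1) by (simp add: power_mult less_imp_le)
  ultimately have Q: "(norm t / a) ^ m \<le> norm (exp_arsinh_sqrt (t / of_real a)) ^ (2 * m)"
    by simp
  have "norm (exp_phase n m a t) \<le> (1 / norm t ^ n) / (norm t / a) ^ m"
    unfolding norm_exp_phase using P Q assms by (intro frac_le) auto
  also have "\<dots> = a ^ m / norm t ^ (n + m)"
    by (simp add: power_add power_divide)
  finally show ?thesis .
qed

lemma exp_phase_of_real_unit:
  assumes "0 < a" "0 \<le> x" "x \<le> 1"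
  shows "exp_phase n m a (of_real x)
           = cis (2 * n * arcsin (sqrt x)) * of_real (exp (- (2 * m * arsinh (sqrt (x / a)))))"
proof -
  have "exp_arsinh_sqrt (of_real x / of_real a) = of_real (exp (arsinh (sqrt (x / a))))"
    using exp_arsinh_sqrt_of_real_nonneg[of "x / a"] assms by simp
  moreover have "exp (arsinh (sqrt (x / a))) ^ (2 * m) = exp (2 * m * arsinh (sqrt (x / a)))"
    by (subst exp_of_nat_mult[symmetric]) simp
  ultimately have Q: "exp_arsinh_sqrt (of_real x / of_real a) ^ (2 * m)
                        = of_real (exp (2 * m * arsinh (sqrt (x / a))))"
    by (simp flip: of_real_power)
  have P: "exp_i_arcsin_sqrt (of_real x) ^ (2 * n) = cis (2 * n * arcsin (sqrt x))"
    using assms by (simp add: exp_i_arcsin_sqrt_of_real_unit Complex.DeMoivre)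
  show ?thesis
    unfolding exp_phase_def P Q by (simp add: exp_minus divide_inverse)
qed

lemma exp_phase_of_real_neg:
  assumes "0 < a" "-a \<le> x" "x \<le> 0"
  shows "exp_phase n m a (of_real x)
           = cis (- (2 * m * arcsin (sqrt (- x / a)))) * of_real (exp (- (2 * n * arsinh (sqrt (- x)))))"
proof -
  have "-1 \<le> x / a" "x / a \<le> 0"
    using assms by (simp_all add: le_divide_eq divide_le_0_iff)
  then have "exp_arsinh_sqrt (of_real (x / a)) = cis (arcsin (sqrt (- (x / a))))"
    by (rule exp_arsinh_sqrt_of_real_ge_minus_1)
  then have Q: "exp_arsinh_sqrt (of_real x / of_real a) ^ (2 * m) = cis (2 * m * arcsin (sqrt (- x / a)))"
    by (simp add: Complex.DeMoivre)
  have "exp (- arsinh (sqrt (- x))) ^ (2 * n) = exp (- (2 * n * arsinh (sqrt (- x))))"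
    by (subst exp_of_nat_mult[symmetric]) simp
  then have P: "exp_i_arcsin_sqrt (of_real x) ^ (2 * n) = of_real (exp (- (2 * n * arsinh (sqrt (- x)))))"
    using assms(3) by (simp add: exp_i_arcsin_sqrt_of_real_nonpos flip: of_real_power)
  show ?thesis
    unfolding exp_phase_def P Q by (simp add: divide_inverse mult.commute)
qed

lemma exp_phase_of_real_in_Reals:
  assumes "0 < a" "x \<notin> {-a..1}"
  shows "exp_phase n m a (of_real x) \<in> \<real>"
proof -
  have i_mult_Reals: "(\<i> * of_real r) ^ (2 * k) \<in> \<real>" for r :: real and k :: nat
    by (simp add: power_mult power_mult_distrib)
  consider "1 < x" | "x < -a" using assms(2) by fastforce
  then have "exp_i_arcsin_sqrt (of_real x) ^ (2 * n) \<in> \<real> \<and> exp_arsinh_sqrt (of_real (x / a)) ^ (2 * m) \<in> \<real>"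
  proof cases
    case 1
    then have "exp_i_arcsin_sqrt (of_real x) = \<i> * of_real (sqrt x - sqrt (x - 1))"
      by (simp add: exp_i_arcsin_sqrt_of_real_ge_1)
    moreover have "exp_arsinh_sqrt (of_real (x / a)) = of_real (exp (arsinh (sqrt (x / a))))"
      using 1 assms(1) by (intro exp_arsinh_sqrt_of_real_nonneg) simp
    ultimately show ?thesis
      using i_mult_Reals by (simp only:) simp
  next
    case 2
    then have "exp_i_arcsin_sqrt (of_real x) = of_real (exp (- arsinh (sqrt (- x))))"
      using assms(1) by (simp add: exp_i_arcsin_sqrt_of_real_nonpos)
    moreover have "x / a \<le> -1"
      using 2 assms(1) by (simp add: divide_le_eq)
    then have "exp_arsinh_sqrt (of_real (x / a)) = \<i> * of_real (sqrt (- (x / a)) + sqrt (- (x / a) - 1))"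
      by (rule exp_arsinh_sqrt_of_real_le_minus_1)
    ultimately show ?thesis
      using i_mult_Reals by (simp only:) simp
  qed
  then show ?thesis
    unfolding exp_phase_def by (intro Reals_divide) auto
qed

text \<open>The quotient \<open>(exp_phase n m a t - 1) / upper_sqrt t\<close>, written so that it is visibly
  continuous at \<open>t = 0\<close>.\<close>
definition exp_phase_quot :: "nat \<Rightarrow> nat \<Rightarrow> real \<Rightarrow> complex \<Rightarrow> complex" where
  "exp_phase_quot n m a t =
     (\<i> * (1 - upper_sqrt t / (upper_sqrt (t - 1) + \<i>)) * (\<Sum>i<2 * n. exp_i_arcsin_sqrt t ^ i)
      - (1 + upper_sqrt (t / of_real a) / (upper_sqrt (t / of_real a + 1) + 1)) / of_real (sqrt a)
          * (\<Sum>i<2 * m. exp_arsinh_sqrt (t / of_real a) ^ i))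
     / exp_arsinh_sqrt (t / of_real a) ^ (2 * m)"

lemma upper_sqrt_mult_exp_phase_quot:
  assumes "0 < a" "0 \<le> Im t"
  shows "upper_sqrt t * exp_phase_quot n m a t = exp_phase n m a t - 1"
proof -
  define P Q where "P = exp_i_arcsin_sqrt t" and "Q = exp_arsinh_sqrt (t / of_real a)"
  define \<alpha> \<beta> where "\<alpha> = \<i> * (1 - upper_sqrt t / (upper_sqrt (t - 1) + \<i>))"
    and "\<beta> = (1 + upper_sqrt (t / of_real a) / (upper_sqrt (t / of_real a + 1) + 1)) / of_real (sqrt a)"
  have "0 \<le> Im (t / of_real a)" using assms by simp
  then have Q0: "Q \<noteq> 0" and "Q - 1 = upper_sqrt (t / of_real a)
      * (1 + upper_sqrt (t / of_real a) / (upper_sqrt (t / of_real a + 1) + 1))"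
    unfolding Q_def by (simp_all add: exp_arsinh_sqrt_minus_1)
  then have Q1: "Q - 1 = upper_sqrt t * \<beta>"
    using assms by (simp add: upper_sqrt_divide_real \<beta>_def)
  have P1: "P - 1 = upper_sqrt t * \<alpha>"
    unfolding P_def \<alpha>_def using exp_i_arcsin_sqrt_minus_1[OF assms(2)] by (simp add: mult.assoc mult.left_commute)
  have "exp_phase n m a t - 1 = ((P ^ (2 * n) - 1) - (Q ^ (2 * m) - 1)) / Q ^ (2 * m)"
    using Q0 by (simp add: exp_phase_def P_def Q_def diff_divide_distrib)
  also have "\<dots> = ((P - 1) * (\<Sum>i<2 * n. P ^ i) - (Q - 1) * (\<Sum>i<2 * m. Q ^ i)) / Q ^ (2 * m)"
    by (simp only: power_diff_1_eq)
  also have "\<dots> = upper_sqrt t * ((\<alpha> * (\<Sum>i<2 * n. P ^ i) - \<beta> * (\<Sum>i<2 * m. Q ^ i)) / Q ^ (2 * m))"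
    unfolding P1 Q1 by (simp add: right_diff_distrib mult.assoc)
  also have "\<dots> = upper_sqrt t * exp_phase_quot n m a t"
    by (simp add: exp_phase_quot_def P_def Q_def \<alpha>_def \<beta>_def)
  finally show ?thesis by simp
qed

text \<open>The function \<open>G\<close> of the proof idea, with \<open>t ^ k / t\<close> in place of \<open>t powi j\<close>.\<close>
definition contour_integrand :: "nat \<Rightarrow> nat \<Rightarrow> real \<Rightarrow> nat \<Rightarrow> complex \<Rightarrow> complex" where
  "contour_integrand n m a k t = - (exp_phase_quot n m a t ^ 2 * t ^ k / (exp_phase n m a t + 1) ^ 2)"

lemma contour_integrand_eq:
  assumes "0 < a" "0 \<le> Im t" "t \<noteq> 0"
  shows "contour_integrand n m a k t
           = - (((exp_phase n m a t - 1) / (exp_phase n m a t + 1)) ^ 2) * (t ^ k / t)"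
proof -
  have "exp_phase_quot n m a t = (exp_phase n m a t - 1) / upper_sqrt t"
    using upper_sqrt_mult_exp_phase_quot[OF assms(1,2)] assms(3)
    by (metis nonzero_mult_div_cancel_left norm_eq_zero norm_upper_sqrt real_sqrt_eq_zero_cancel_iff)
  then show ?thesis
    by (simp add: contour_integrand_def power_divide)
qed

lemma continuous_on_contour_integrand:
  assumes "0 < n" "0 < m" "0 < a"
  shows "continuous_on {z. 0 \<le> Im z} (contour_integrand n m a k)"
proof -
  have "continuous_on {z. 0 \<le> Im z} (exp_phase n m a)"
    unfolding exp_phase_def using assms by (intro continuous_intros) auto
  moreover have "continuous_on {z. 0 \<le> Im z} (exp_phase_quot n m a)"
    unfolding exp_phase_quot_def using assms
    by (intro continuous_intros) (auto simp: upper_sqrt_add_nonzero)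
  ultimately show ?thesis
    unfolding contour_integrand_def using exp_phase_plus_1_nonzero[OF assms]
    by (intro continuous_intros) auto
qed

lemma holomorphic_on_contour_integrand:
  assumes "0 < n" "0 < m" "0 < a"
  shows "contour_integrand n m a k holomorphic_on {z. 0 < Im z}"
proof -
  have "exp_phase n m a holomorphic_on {z. 0 < Im z}"
    unfolding exp_phase_def using assms
    by (intro holomorphic_intros) auto
  moreover have "exp_phase_quot n m a holomorphic_on {z. 0 < Im z}"
    unfolding exp_phase_quot_def using assms
    by (intro holomorphic_intros) (auto simp: upper_sqrt_add_nonzero)
  ultimately show ?thesis
    unfolding contour_integrand_def using exp_phase_plus_1_nonzero[OF assms]
    by (intro holomorphic_intros) auto
qed

lemma Im_contour_integrand_of_real:
  assumes "0 < n" "0 < m" "0 < a" "-a \<le> x" "x \<le> 1" "x \<noteq> 0"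
  shows "Im (contour_integrand n m a k (of_real x)) = 2 * (numer n m a x / (denom n m a x)\<^sup>2) * (x ^ k / x)"
proof -
  define E where "E = exp_phase n m a (of_real x)"
  have "contour_integrand n m a k (of_real x) = - (((E - 1) / (E + 1)) ^ 2) * of_real (x ^ k / x)"
    using contour_integrand_eq[of a "of_real x" n m k] assms(3,6) by (simp add: E_def)
  then have "Im (contour_integrand n m a k (of_real x)) = Im (- (((E - 1) / (E + 1)) ^ 2)) * (x ^ k / x)"
    by simp
  also have "Im (- (((E - 1) / (E + 1)) ^ 2)) = 2 * (numer n m a x / (denom n m a x)\<^sup>2)"
  proof (cases "0 < x")
    case True
    define X Y where "X = 2 * n * arcsin (sqrt x)" and "Y = 2 * m * arsinh (sqrt (x / a))"
    have "E = cis X * of_real (exp (- Y))"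
      unfolding E_def X_def Y_def using assms True by (simp add: exp_phase_of_real_unit)
    moreover have "0 < Y"
      unfolding Y_def using True assms by simp
    moreover have "numer n m a x = sin X * sinh Y" "denom n m a x = cos X + cosh Y"
      unfolding numer_def denom_def X_def Y_def using True by auto
    ultimately show ?thesis
      using Im_minus_square_quot_cis_exp[of Y X] by simp
  next
    case False
    with assms(6) have "x < 0" by simp
    define C Y where "C = 2 * m * arcsin (sqrt (- x / a))" and "Y = 2 * n * arsinh (sqrt (- x))"
    have "E = cis (- C) * of_real (exp (- Y))"
      unfolding E_def C_def Y_def using assms \<open>x < 0\<close> by (simp add: exp_phase_of_real_neg)
    moreover have "0 < Y"
      unfolding Y_def using \<open>x < 0\<close> assms by simp
    moreover have "numer n m a x = sin (- C) * sinh Y" "denom n m a x = cos (- C) + cosh Y"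
      unfolding numer_def denom_def C_def Y_def using \<open>x < 0\<close> by auto
    ultimately show ?thesis
      using Im_minus_square_quot_cis_exp[of Y "- C"] by simp
  qed
  finally show ?thesis .
qed

lemma Im_contour_integrand_of_real_outside:
  assumes "0 < n" "0 < m" "0 < a" "x \<notin> {-a..1}"
  shows "Im (contour_integrand n m a k (of_real x)) = 0"
proof -
  define E where "E = exp_phase n m a (of_real x)"
  have "x \<noteq> 0"
    using assms(3,4) by auto
  then have "contour_integrand n m a k (of_real x) = - (((E - 1) / (E + 1)) ^ 2) * of_real (x ^ k / x)"
    using contour_integrand_eq[of a "of_real x" n m k] assms(3) by (simp add: E_def)
  moreover have "E \<in> \<real>"
    unfolding E_def using assms(3,4) by (rule exp_phase_of_real_in_Reals)
  ultimately have "contour_integrand n m a k (of_real x) \<in> \<real>"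
    by simp
  then show ?thesis
    by (simp add: complex_is_Real_iff)
qed

lemma norm_contour_integrand_add_le:
  assumes "0 < n" "0 < m" "0 < a" "k + 1 \<le> n + m" "0 \<le> Im t" "2 \<le> norm t" "a \<le> norm t"
  shows "norm (contour_integrand n m a k t + t ^ k / t) \<le> 16 * a ^ m / norm t ^ 2"
proof -
  define E R where "E = exp_phase n m a t" and "R = norm t"
  have R: "2 \<le> R" "a \<le> R" "t \<noteq> 0"
    using assms(6,7) by (auto simp: R_def)
  have E_le: "norm E \<le> a ^ m / R ^ (n + m)"
    unfolding E_def R_def using assms(3,5) R(3) by (rule norm_exp_phase_le)
  have "a ^ m \<le> R ^ m"
    using assms(3) R by (intro power_mono) auto
  moreover have "2 \<le> R ^ n"
    using R assms(1) power_increasing[of 1 n R] by simp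
  ultimately have "2 * a ^ m \<le> R ^ n * R ^ m"
    using assms(3) by (intro mult_mono) auto
  then have "a ^ m / R ^ (n + m) \<le> 1 / 2"
    using R by (simp add: power_add divide_le_eq mult.commute)
  with E_le have factor: "norm (1 - ((E - 1) / (E + 1)) ^ 2) \<le> 16 * norm E"
    by (intro norm_one_minus_square_quot_le) linarith
  have "norm (t ^ k / t) = R ^ (k + 1) / R ^ 2"
    using R by (simp add: R_def norm_divide norm_power power2_eq_square)
  also have "\<dots> \<le> R ^ (n + m) / R ^ 2"
    using R assms(4) by (intro divide_right_mono power_increasing) auto
  finally have power: "norm (t ^ k / t) \<le> R ^ (n + m) / R ^ 2" .
  have "contour_integrand n m a k t + t ^ k / t = (1 - ((E - 1) / (E + 1)) ^ 2) * (t ^ k / t)"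
    using contour_integrand_eq[OF assms(3,5) R(3), of n m k]
    by (simp add: E_def left_diff_distrib diff_divide_distrib)
  then have "norm (contour_integrand n m a k t + t ^ k / t)
               = norm (1 - ((E - 1) / (E + 1)) ^ 2) * norm (t ^ k / t)"
    by (simp only: norm_mult)
  also have "\<dots> \<le> 16 * norm E * (R ^ (n + m) / R ^ 2)"
    using factor power by (rule mult_mono) auto
  also have "\<dots> \<le> 16 * (a ^ m / R ^ (n + m)) * (R ^ (n + m) / R ^ 2)"
    using E_le R by (intro mult_right_mono) auto
  also have "\<dots> = 16 * a ^ m / R ^ 2"
    using R by simp
  finally show ?thesis
    by (simp add: R_def)
qed

lemma has_integral_Im_contour_integrand:
  assumes "0 < n" "0 < m" "0 < a" "k + 1 \<le> n + m"
  shows "((\<lambda>x. Im (contour_integrand n m a k (of_real x))) has_integral (if k = 0 then pi else 0))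
           {-a..1}"
proof (rule Im_has_integral_by_upper_half_disc[where f = "contour_integrand n m a k"
      and q = "\<lambda>z. z ^ k / z" and R\<^sub>0 = "max 2 a" and C = "16 * a ^ m"])
  show "continuous_on {z. 0 \<le> Im z} (contour_integrand n m a k)"
    using assms(1-3) by (rule continuous_on_contour_integrand)
  show "contour_integrand n m a k holomorphic_on {z. 0 < Im z}"
    using assms(1-3) by (rule holomorphic_on_contour_integrand)
  show "Im (contour_integrand n m a k (of_real x)) = 0" if "x \<notin> {-a..1}" for x
    using assms(1-3) that by (rule Im_contour_integrand_of_real_outside)
  show "\<exists>I. ((\<lambda>z. z ^ k / z) has_contour_integral I) (part_circlepath 0 R 0 pi)
            \<and> Im I = (if k = 0 then pi else 0)" if "max 2 a \<le> R" for R
  proof -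
    have "0 < R"
      using that by simp
    then obtain I where "((\<lambda>z. z ^ k / z) has_contour_integral I) (part_circlepath 0 R 0 pi)"
      and "Im I = (if k = 0 then pi else 0)"
      by (rule has_contour_integral_power_div_part_circlepath)
    then show ?thesis
      by blast
  qed
  show "norm (contour_integrand n m a k z + z ^ k / z) \<le> 16 * a ^ m / norm z ^ 2"
    if "0 \<le> Im z" "max 2 a \<le> norm z" for z
    using that by (intro norm_contour_integrand_add_le[OF assms]) auto
qed (use assms(3) in simp)

theorem mainTheorem5:
  fixes n m :: nat and a :: real and j :: int
  assumes "0 < n" and "0 < m" and "0 < a"
    and "j = -1 \<or> (0 \<le> j \<and> j \<le> int n + int m - 2)"
  shows "((\<lambda>t. numer n m a t / (denom n m a t)\<^sup>2 * t powi j) has_integral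
           (if j = -1 then pi / 2 else 0)) {-a..1}"
proof -
  define k where "k = nat (j + 1)"
  have j: "j = int k - 1" and k: "k + 1 \<le> n + m" and k0: "k = 0 \<longleftrightarrow> j = -1"
    using assms(1,4) by (auto simp: k_def)
  have "((\<lambda>x. Im (contour_integrand n m a k (of_real x)) / 2) has_integral (if k = 0 then pi else 0) / 2)
          {-a..1}"
    using has_integral_Im_contour_integrand[OF assms(1-3) k] by (rule has_integral_divide)
  moreover have "(if k = 0 then pi else 0) / 2 = (if j = -1 then pi / 2 else 0)"
    using k0 by simp
  ultimately have "((\<lambda>x. Im (contour_integrand n m a k (of_real x)) / 2) has_integral
                      (if j = -1 then pi / 2 else 0)) {-a..1}"
    by simp
  then show ?thesis
  proof (rule has_integral_spike_finite[where S = "{0}", rotated 2])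
    show "numer n m a x / (denom n m a x)\<^sup>2 * x powi j = Im (contour_integrand n m a k (of_real x)) / 2"
      if "x \<in> {-a..1} - {0}" for x
      using that Im_contour_integrand_of_real[OF assms(1-3), of x k] by (simp add: j power_int_diff)
  qed simp
qed

end
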